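(* Let $m\ge1$, $n\ge1$, $N>2n$, let $\Sigma_0,\dots,\Sigma_n\in\mathbb R^{m\times m}$ and let $\mathbf T_n$ be the block-Toeplitz matrix whose $(i,j)$ block ($i,j=0,\dots,n$) is $\Sigma_{i-j}$ if $i\ge j$ and $\Sigma_{j-i}^\top$ if $i<j$. Assume there exists a symmetric positive definite $mN\times mN$ matrix $\bar{\boldsymbol\Sigma}_N$ with $E_n^\top\bar{\boldsymbol\Sigma}_NE_n=\mathbf T_n$ and $\mathbf U_N^\top\bar{\boldsymbol\Sigma}_N\mathbf U_N=\bar{\boldsymbol\Sigma}_N$. Then for every $(\Lambda,\Theta)\in\mathcal L_+$, $$J(\Lambda,\Theta)\ge mN+\log\det\bar{\boldsymbol\Sigma}_N,$$ where $J(\Lambda,\Theta)=\operatorname{Tr}(\Lambda\mathbf T_n)-\log\det(E_n\Lambda E_n^\top+\mathbf U_N\Theta\mathbf U_N^\top-\Theta)$.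
   Context: $\mathfrak S_k$ denotes the space of real symmetric $mk\times mk$ matrices. $E_n$ is the $mN\times m(n+1)$ matrix with $N\times(n+1)$ blocks of size $m\times m$ whose $(i,i)$ blocks ($i=1,\dots,n+1$) are $I_m$ and other blocks $0$. $\mathbf U_N$ is the $mN\times mN$ block shift matrix whose $(i,i+1)$ blocks ($i=1,\dots,N-1$) and $(N,1)$ block are $I_m$, others $0$. The linear map $A:\mathfrak S_{n+1}\times\mathfrak S_N\to\mathfrak S_N$ is $A(\Lambda,\Theta)=E_n\Lambda E_n^\top+\mathbf U_N\Theta\mathbf U_N^\top-\Theta$, and $\mathcal L_+=\{(\Lambda,\Theta)\in(\ker A)^\perp:A(\Lambda,\Theta)>0\}$, orthogonality being with respect to $\langle(\Lambda_1,\Theta_1),(\Lambda_2,\Theta_2)\rangle=\operatorname{Tr}(\Lambda_1\Lambda_2)+\operatorname{Tr}(\Theta_1\Theta_2)$. *)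

theory Defs
  imports "Jordan_Normal_Form.Matrix" "Jordan_Normal_Form.Determinant"
begin

text \<open>Block indices are
0-based: the block (i,j) of a matrix with m x m blocks consists of entries (r,c) with
r div m = i, c div m = j, and inside-block position (r mod m, c mod m).\<close>

definition mtrace :: "real mat \<Rightarrow> real" where
  "mtrace A = (\<Sum>i<dim_row A. A $$ (i, i))"

definition pos_def_mat :: "nat \<Rightarrow> real mat \<Rightarrow> bool" where
  "pos_def_mat k A \<longleftrightarrow> A \<in> carrier_mat k k \<and> transpose_mat A = A \<and>
     (\<forall>v \<in> carrier_vec k. v \<noteq> 0\<^sub>v k \<longrightarrow> v \<bullet> (A *\<^sub>v v) > 0)"

definition symS :: "nat \<Rightarrow> nat \<Rightarrow> real mat set" where
  "symS m k = {A. A \<in> carrier_mat (m*k) (m*k) \<and> transpose_mat A = A}"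

definition toeplitzT :: "nat \<Rightarrow> nat \<Rightarrow> (nat \<Rightarrow> real mat) \<Rightarrow> real mat" where
  "toeplitzT m n Sig = mat (m*(n+1)) (m*(n+1)) (\<lambda>(r,c).
     (let i = r div m; j = c div m; a = r mod m; b = c mod m in
      if j \<le> i then Sig (i - j) $$ (a, b)
      else transpose_mat (Sig (j - i)) $$ (a, b)))"

definition Emat :: "nat \<Rightarrow> nat \<Rightarrow> nat \<Rightarrow> real mat" where
  "Emat m N n = mat (m*N) (m*(n+1)) (\<lambda>(r,c).
     if r div m = c div m \<and> r mod m = c mod m then 1 else 0)"

text \<open>U_N: mN x mN block shift; blocks (i,i+1) (1-based i = 1..N-1) and (N,1) are I_m,
  i.e. with 0-based block indices, block (i, (i+1) mod N) is I_m.\<close>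
definition Umat :: "nat \<Rightarrow> nat \<Rightarrow> real mat" where
  "Umat m N = mat (m*N) (m*N) (\<lambda>(r,c).
     if c div m = (r div m + 1) mod N \<and> r mod m = c mod m then 1 else 0)"

definition Aop :: "nat \<Rightarrow> nat \<Rightarrow> nat \<Rightarrow> real mat \<Rightarrow> real mat \<Rightarrow> real mat" where
  "Aop m N n \<Lambda> \<Theta> =
     Emat m N n * \<Lambda> * transpose_mat (Emat m N n)
     + Umat m N * \<Theta> * transpose_mat (Umat m N) - \<Theta>"

definition kerA_perp :: "nat \<Rightarrow> nat \<Rightarrow> nat \<Rightarrow> (real mat \<times> real mat) set" where
  "kerA_perp m N n = {(\<Lambda>, \<Theta>). \<Lambda> \<in> symS m (n+1) \<and> \<Theta> \<in> symS m N \<and>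
     (\<forall>\<Lambda>' \<in> symS m (n+1). \<forall>\<Theta>' \<in> symS m N.
        Aop m N n \<Lambda>' \<Theta>' = 0\<^sub>m (m*N) (m*N) \<longrightarrow>
        mtrace (\<Lambda> * \<Lambda>') + mtrace (\<Theta> * \<Theta>') = 0)}"

definition Lplus :: "nat \<Rightarrow> nat \<Rightarrow> nat \<Rightarrow> (real mat \<times> real mat) set" where
  "Lplus m N n = {(\<Lambda>, \<Theta>). (\<Lambda>, \<Theta>) \<in> kerA_perp m N n \<and>
     pos_def_mat (m*N) (Aop m N n \<Lambda> \<Theta>)}"

definition Jfun :: "nat \<Rightarrow> nat \<Rightarrow> nat \<Rightarrow> (nat \<Rightarrow> real mat) \<Rightarrow> real mat \<Rightarrow> real mat \<Rightarrow> real" where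
  "Jfun m N n Sig \<Lambda> \<Theta> =
     mtrace (\<Lambda> * toeplitzT m n Sig) - ln (det (Aop m N n \<Lambda> \<Theta>))"

end

theory Submission
  imports Defs "Jordan_Normal_Form.Schur_Decomposition"
begin

text \<open>Put \<open>A = E \<Lambda> E\<^sup>T + U \<Theta> U\<^sup>T - \<Theta>\<close>. Cyclicity of the trace together with
\<open>E\<^sup>T \<Sigma> E = T\<^sub>n\<close> and \<open>U\<^sup>T \<Sigma> U = \<Sigma>\<close> gives \<open>Tr (\<Lambda> T\<^sub>n) = Tr (A \<Sigma>)\<close>. As a product of two
positive definite matrices, \<open>A \<Sigma>\<close> has only positive real eigenvalues \<open>\<lambda>\<^sub>i\<close>, so summing
\<open>ln \<lambda>\<^sub>i \<le> \<lambda>\<^sub>i - 1\<close> gives \<open>mN + ln det (A \<Sigma>) \<le> Tr (A \<Sigma>)\<close>; splitting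
\<open>ln det (A \<Sigma>) = ln det A + ln det \<Sigma>\<close> yields the bound.\<close>

lemma cscalar_prod_real_mat_expand:
  fixes X :: "real mat"
  assumes X: "X \<in> carrier_mat n n" and v: "v \<in> carrier_vec n"
  shows "(map_mat complex_of_real X *\<^sub>v v) \<bullet>c v = (\<Sum>i<n. \<Sum>k<n. of_real (X $$ (i, k)) * v $ k * cnj (v $ i))"
  using X v by (auto intro!: sum.cong simp: scalar_prod_def lessThan_atLeast0 sum_distrib_right)

lemma real_quadratic_form_expand:
  fixes X :: "real mat"
  assumes X: "X \<in> carrier_mat n n" and a: "a \<in> carrier_vec n"
  shows "a \<bullet> (X *\<^sub>v a) = (\<Sum>i<n. \<Sum>k<n. X $$ (i, k) * a $ i * a $ k)"
  using X a by (auto intro!: sum.cong simp: scalar_prod_def lessThan_atLeast0 sum_distrib_left mult_ac)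

lemma pos_def_mat_nonneg:
  assumes "pos_def_mat n X" and "a \<in> carrier_vec n"
  shows "a \<bullet> (X *\<^sub>v a) \<ge> 0"
  using assms unfolding pos_def_mat_def
  by (cases "a = 0\<^sub>v n") (auto simp: scalar_prod_def intro: less_imp_le)

lemma pos_def_mat_cscalar_prod_pos_real:
  assumes pd: "pos_def_mat n X" and v: "v \<in> carrier_vec n" and v0: "v \<noteq> 0\<^sub>v n"
  shows "\<exists>r>0. (map_mat complex_of_real X *\<^sub>v v) \<bullet>c v = of_real r"
proof -
  have X: "X \<in> carrier_mat n n" and sym: "transpose_mat X = X"
    using pd unfolding pos_def_mat_def by auto
  have symm: "X $$ (i, k) = X $$ (k, i)" if "i < n" "k < n" for i k
    using sym that X by (metis carrier_matD index_transpose_mat(1))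
  \<comment> \<open>For \<open>v = a + i b\<close> the form splits into the real forms of \<open>a\<close> and \<open>b\<close>; the cross terms cancel by symmetry.\<close>
  define a where "a = vec n (\<lambda>i. Re (v $ i))"
  define b where "b = vec n (\<lambda>i. Im (v $ i))"
  have a: "a \<in> carrier_vec n" and b: "b \<in> carrier_vec n" unfolding a_def b_def by auto
  let ?q = "(map_mat complex_of_real X *\<^sub>v v) \<bullet>c v"
  have "Re ?q = (\<Sum>i<n. \<Sum>k<n. X $$ (i, k) * a $ i * a $ k) + (\<Sum>i<n. \<Sum>k<n. X $$ (i, k) * b $ i * b $ k)"
    unfolding cscalar_prod_real_mat_expand[OF X v] Re_sum sum.distrib[symmetric]
    by (intro sum.cong refl) (simp add: a_def b_def algebra_simps)
  also have "\<dots> = a \<bullet> (X *\<^sub>v a) + b \<bullet> (X *\<^sub>v b)"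
    using real_quadratic_form_expand[OF X a] real_quadratic_form_expand[OF X b] by simp
  finally have re: "Re ?q = a \<bullet> (X *\<^sub>v a) + b \<bullet> (X *\<^sub>v b)" .
  have "Im ?q = (\<Sum>i<n. \<Sum>k<n. X $$ (i, k) * a $ i * b $ k) - (\<Sum>i<n. \<Sum>k<n. X $$ (i, k) * b $ i * a $ k)"
    unfolding cscalar_prod_real_mat_expand[OF X v] Im_sum sum_subtractf[symmetric]
    by (intro sum.cong refl) (simp add: a_def b_def algebra_simps)
  also have "(\<Sum>i<n. \<Sum>k<n. X $$ (i, k) * b $ i * a $ k) = (\<Sum>k<n. \<Sum>i<n. X $$ (i, k) * b $ i * a $ k)"
    by (rule sum.swap)
  also have "\<dots> = (\<Sum>i<n. \<Sum>k<n. X $$ (i, k) * a $ i * b $ k)"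
    by (intro sum.cong refl) (simp add: symm mult.commute mult.left_commute)
  finally have im: "Im ?q = 0" by simp
  have "a \<noteq> 0\<^sub>v n \<or> b \<noteq> 0\<^sub>v n"
    using v v0 unfolding a_def b_def by (auto simp: vec_eq_iff complex_eq_iff)
  hence "a \<bullet> (X *\<^sub>v a) + b \<bullet> (X *\<^sub>v b) > 0"
    using pos_def_mat_nonneg[OF pd a] pos_def_mat_nonneg[OF pd b] pd a b
    unfolding pos_def_mat_def by (meson add_pos_nonneg add_nonneg_pos)
  with re im show ?thesis by (intro exI[of _ "Re ?q"]) (auto simp: complex_eq_iff)
qed

text \<open>If \<open>A S v = e v\<close>, then \<open>w = S v\<close> satisfies \<open>\<langle>A w, w\<rangle> = e \<langle>v, S v\<rangle>\<close>, with both forms positive.\<close>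

lemma eigenvalue_mult_pos_def_mat_pos_real:
  assumes pA: "pos_def_mat n A" and pS: "pos_def_mat n S"
    and ev: "eigenvalue (map_mat complex_of_real (A * S)) e"
  shows "\<exists>r>0. e = of_real r"
proof -
  have A: "A \<in> carrier_mat n n" and S: "S \<in> carrier_mat n n"
    using pA pS unfolding pos_def_mat_def by auto
  define Ac where "Ac = map_mat complex_of_real A"
  define Sc where "Sc = map_mat complex_of_real S"
  have Ac: "Ac \<in> carrier_mat n n" and Sc: "Sc \<in> carrier_mat n n"
    using A S unfolding Ac_def Sc_def by auto
  obtain v where v: "v \<in> carrier_vec n" "v \<noteq> 0\<^sub>v n" and Av: "Ac *\<^sub>v (Sc *\<^sub>v v) = e \<cdot>\<^sub>v v"
    using ev A S unfolding eigenvalue_def eigenvector_def Ac_def Sc_def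
    by (auto simp: of_real_hom.mat_hom_mult)
  define w where "w = Sc *\<^sub>v v"
  have w: "w \<in> carrier_vec n" using Sc v unfolding w_def by auto
  obtain rS where rS: "rS > 0" "w \<bullet>c v = of_real rS"
    using pos_def_mat_cscalar_prod_pos_real[OF pS v] unfolding w_def Sc_def by auto
  with v have "w \<noteq> 0\<^sub>v n" by auto
  then obtain rA where rA: "rA > 0" "(Ac *\<^sub>v w) \<bullet>c w = of_real rA"
    using pos_def_mat_cscalar_prod_pos_real[OF pA w] unfolding Ac_def by auto
  have "v \<bullet>c w = conjugate (w \<bullet>c v)"
    using conjugate_conjugate_sprod[OF v(1) w] conjugate_vec_sprod_comm[OF w v(1)] by simp
  also have "\<dots> = of_real rS" using rS by simp
  finally have "(Ac *\<^sub>v w) \<bullet>c w = e * of_real rS"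
    using Av v w unfolding w_def[symmetric] by simp
  with rA rS have "e = of_real (rA / rS)" by (simp add: field_simps)
  with rA rS show ?thesis by (intro exI[of _ "rA / rS"]) auto
qed

lemma sum_diag_mult_comm:
  fixes X Y :: "'a::comm_ring_1 mat"
  assumes X: "X \<in> carrier_mat n k" and Y: "Y \<in> carrier_mat k n"
  shows "(\<Sum>i<n. (X * Y) $$ (i, i)) = (\<Sum>j<k. (Y * X) $$ (j, j))"
proof -
  have "(\<Sum>i<n. (X * Y) $$ (i, i)) = (\<Sum>i<n. \<Sum>j<k. X $$ (i, j) * Y $$ (j, i))"
    using X Y by (intro sum.cong refl) (auto simp: scalar_prod_def lessThan_atLeast0)
  also have "\<dots> = (\<Sum>j<k. \<Sum>i<n. Y $$ (j, i) * X $$ (i, j))"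
    by (subst sum.swap) (simp add: mult.commute)
  also have "\<dots> = (\<Sum>j<k. (Y * X) $$ (j, j))"
    using X Y by (intro sum.cong refl) (auto simp: scalar_prod_def lessThan_atLeast0)
  finally show ?thesis .
qed

lemma mtrace_mult_comm:
  assumes "X \<in> carrier_mat n k" and "Y \<in> carrier_mat k n"
  shows "mtrace (X * Y) = mtrace (Y * X)"
  using sum_diag_mult_comm[OF assms] assms unfolding mtrace_def by simp

lemma det_trace_char_poly_linear_factors:
  fixes M :: "complex mat"
  assumes M: "M \<in> carrier_mat n n" and cp: "char_poly M = (\<Prod>a\<leftarrow>es. [:- a, 1:])"
  shows "det M = prod_list es" and "(\<Sum>i<n. M $$ (i, i)) = sum_list es"
proof -
  obtain B P Q where "schur_decomposition M es = (B, P, Q)" by (metis prod_cases3)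
  from schur_decomposition[OF M cp this]
  have sim: "similar_mat_wit M B P Q" and ut: "upper_triangular B" and dg: "diag_mat B = es"
    by auto
  from sim M have B: "B \<in> carrier_mat n n" and P: "P \<in> carrier_mat n n" and Q: "Q \<in> carrier_mat n n"
    and QP: "Q * P = 1\<^sub>m n" and MPBQ: "M = P * (B * Q)"
    unfolding similar_mat_wit_def Let_def by (auto simp: assoc_mult_mat[of _ n n _ n _ n])
  show "det M = prod_list es"
    using det_similar[of M B] sim M dg det_upper_triangular[OF ut B]
    unfolding similar_mat_def by auto
  have "(\<Sum>i<n. M $$ (i, i)) = (\<Sum>i<n. ((B * Q) * P) $$ (i, i))"
    unfolding MPBQ using sum_diag_mult_comm[OF P, of "B * Q"] B Q by auto
  also have "(B * Q) * P = B"
    using B Q P QP by (simp add: assoc_mult_mat[of _ n n _ n _ n])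
  finally show "(\<Sum>i<n. M $$ (i, i)) = sum_list es"
    using B unfolding dg[symmetric] diag_mat_def
    by (simp add: sum_list_sum_nth lessThan_atLeast0)
qed

lemma prod_list_pos:
  fixes rs :: "real list"
  assumes "\<forall>r\<in>set rs. r > 0"
  shows "prod_list rs > 0"
  using assms by (induction rs) auto

lemma ln_prod_list_le_sum_list:
  fixes rs :: "real list"
  assumes "\<forall>r\<in>set rs. r > 0"
  shows "real (length rs) + ln (prod_list rs) \<le> sum_list rs"
  using assms
proof (induction rs)
  case (Cons r rs)
  then have r: "r > 0" and rs: "prod_list rs > 0" by (auto intro: prod_list_pos)
  have "ln (r * prod_list rs) = ln r + ln (prod_list rs)" by (rule ln_mult_pos[OF r rs])
  with ln_le_minus_one[OF r] Cons show ?case by simp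
qed simp

lemma pos_def_mat_mult_eigenvalues:
  assumes pA: "pos_def_mat n A" and pS: "pos_def_mat n S"
  obtains rs where "length rs = n" and "\<forall>r\<in>set rs. r > 0"
    and "det (A * S) = prod_list rs" and "mtrace (A * S) = sum_list rs"
proof -
  have AS: "A * S \<in> carrier_mat n n" using pA pS unfolding pos_def_mat_def by auto
  define M where "M = map_mat complex_of_real (A * S)"
  have M: "M \<in> carrier_mat n n" unfolding M_def using AS by auto
  obtain es where cp: "char_poly M = (\<Prod>a\<leftarrow>es. [:- a, 1:])" and len: "length es = n"
    using char_poly_factorized[OF M] by auto
  have "\<exists>r>0. e = of_real r" if "e \<in> set es" for e
  proof -
    from that obtain xs ys where "es = xs @ e # ys" by (meson split_list)
    then have "eigenvalue M e" using eigenvalue_root_char_poly[OF M] cp by simp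
    then show ?thesis using eigenvalue_mult_pos_def_mat_pos_real[OF pA pS] unfolding M_def by blast
  qed
  then have es: "es = map complex_of_real (map Re es)" and pos: "\<forall>r\<in>set (map Re es). r > 0"
    by (force intro!: map_idI[symmetric])+
  have "complex_of_real (det (A * S)) = complex_of_real (prod_list (map Re es))"
    using det_trace_char_poly_linear_factors(1)[OF M cp] es unfolding M_def
    by (metis of_real_hom.hom_det of_real_hom.hom_prod_list)
  moreover have "complex_of_real (mtrace (A * S)) = complex_of_real (sum_list (map Re es))"
    using det_trace_char_poly_linear_factors(2)[OF M cp] es AS unfolding M_def mtrace_def
    by (metis (no_types, lifting) of_real_hom.hom_sum_list carrier_matD index_map_mat(1) of_real_sum sum.cong lessThan_iff)
  ultimately show ?thesis using that[of "map Re es"] len pos by simp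
qed

lemma pos_def_mat_mult_det_pos:
  assumes "pos_def_mat n A" and "pos_def_mat n S"
  shows "det (A * S) > 0"
  by (metis pos_def_mat_mult_eigenvalues[OF assms] prod_list_pos)

lemma pos_def_mat_mult_trace_ge:
  assumes "pos_def_mat n A" and "pos_def_mat n S"
  shows "real n + ln (det (A * S)) \<le> mtrace (A * S)"
  by (metis pos_def_mat_mult_eigenvalues[OF assms] ln_prod_list_le_sum_list)

lemma pos_def_mat_one: "pos_def_mat n (1\<^sub>m n)"
  unfolding pos_def_mat_def
proof (intro conjI ballI impI)
  fix v :: "real vec"
  assume "v \<in> carrier_vec n" and "v \<noteq> 0\<^sub>v n"
  then show "v \<bullet> (1\<^sub>m n *\<^sub>v v) > 0"
    using conjugate_square_greater_0_vec[of v n] by simp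
qed auto

lemma pos_def_mat_det_pos:
  assumes "pos_def_mat n A"
  shows "det A > 0"
proof -
  have "A \<in> carrier_mat n n" using assms unfolding pos_def_mat_def by simp
  then show ?thesis
    using pos_def_mat_mult_det_pos[OF assms pos_def_mat_one] by simp
qed

lemma mtrace_add:
  assumes "X \<in> carrier_mat n n" and "Y \<in> carrier_mat n n"
  shows "mtrace (X + Y) = mtrace X + mtrace Y"
  using assms unfolding mtrace_def by (simp add: sum.distrib)

lemma mtrace_minus:
  assumes "X \<in> carrier_mat n n" and "Y \<in> carrier_mat n n"
  shows "mtrace (X - Y) = mtrace X - mtrace Y"
  using assms unfolding mtrace_def by (simp add: sum_subtractf)

lemma mtrace_congruence_mult:
  assumes E: "E \<in> carrier_mat K k" and X: "X \<in> carrier_mat k k" and S: "S \<in> carrier_mat K K"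
  shows "mtrace (E * X * transpose_mat E * S) = mtrace (X * (transpose_mat E * S * E))"
proof -
  have "E * X * transpose_mat E * S = E * (X * transpose_mat E * S)"
    using E X S by (simp add: assoc_mult_mat[of _ K k _ k _ K] assoc_mult_mat[of _ K k _ K _ K])
  moreover have "X * (transpose_mat E * S * E) = (X * transpose_mat E * S) * E"
    using E X S by (simp add: assoc_mult_mat[of _ k k _ K _ K] assoc_mult_mat[of _ k K _ K _ k]
        assoc_mult_mat[of _ k k _ K _ k])
  ultimately show ?thesis
    using mtrace_mult_comm[OF E, of "X * transpose_mat E * S"] E X S by auto
qed

lemma mtrace_Aop_mult:
  assumes E: "E \<in> carrier_mat K k" and U: "U \<in> carrier_mat K K"
    and L: "\<Lambda> \<in> carrier_mat k k" and T: "\<Theta> \<in> carrier_mat K K" and S: "S \<in> carrier_mat K K"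
    and USU: "transpose_mat U * S * U = S"
  shows "mtrace ((E * \<Lambda> * transpose_mat E + U * \<Theta> * transpose_mat U - \<Theta>) * S)
    = mtrace (\<Lambda> * (transpose_mat E * S * E))"
proof -
  have X1: "E * \<Lambda> * transpose_mat E \<in> carrier_mat K K" and X2: "U * \<Theta> * transpose_mat U \<in> carrier_mat K K"
    using E L U T by auto
  have "(E * \<Lambda> * transpose_mat E + U * \<Theta> * transpose_mat U - \<Theta>) * S
      = E * \<Lambda> * transpose_mat E * S + U * \<Theta> * transpose_mat U * S - \<Theta> * S"
    by (simp add: minus_mult_distrib_mat[OF add_carrier_mat[OF X2] T S] add_mult_distrib_mat[OF X1 X2 S])
  moreover have "mtrace (U * \<Theta> * transpose_mat U * S) = mtrace (\<Theta> * S)"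
    using mtrace_congruence_mult[OF U T S] USU by simp
  ultimately show ?thesis
    using mtrace_congruence_mult[OF E L S] X1 X2 T S
    by (simp add: mtrace_minus[of _ K] mtrace_add[of _ K])
qed

lemma Emat_carrier: "Emat m N n \<in> carrier_mat (m*N) (m*(n+1))"
  unfolding Emat_def by simp

lemma Umat_carrier: "Umat m N \<in> carrier_mat (m*N) (m*N)"
  unfolding Umat_def by simp

theorem lemma3:
  fixes m n N :: nat and Sig :: "nat \<Rightarrow> real mat" and SigmaBar :: "real mat"
    and \<Lambda> \<Theta> :: "real mat"
  assumes "m \<ge> 1" and "n \<ge> 1" and "N > 2 * n"
    and "\<forall>k \<le> n. Sig k \<in> carrier_mat m m"
    and "pos_def_mat (m*N) SigmaBar"
    and "transpose_mat (Emat m N n) * SigmaBar * Emat m N n = toeplitzT m n Sig"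
    and "transpose_mat (Umat m N) * SigmaBar * Umat m N = SigmaBar"
    and "(\<Lambda>, \<Theta>) \<in> Lplus m N n"
  shows "Jfun m N n Sig \<Lambda> \<Theta> \<ge> real (m*N) + ln (det SigmaBar)"
proof -
  define A where "A = Aop m N n \<Lambda> \<Theta>"
  have pS: "pos_def_mat (m*N) SigmaBar" by fact
  have pA: "pos_def_mat (m*N) A" using assms(8) unfolding Lplus_def A_def by auto
  have S: "SigmaBar \<in> carrier_mat (m*N) (m*N)" and A: "A \<in> carrier_mat (m*N) (m*N)"
    using pS pA unfolding pos_def_mat_def by auto
  have L: "\<Lambda> \<in> carrier_mat (m*(n+1)) (m*(n+1))" and T: "\<Theta> \<in> carrier_mat (m*N) (m*N)"
    using assms(8) unfolding Lplus_def kerA_perp_def symS_def by auto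
  have "mtrace (A * SigmaBar) = mtrace (\<Lambda> * toeplitzT m n Sig)"
    using mtrace_Aop_mult[OF Emat_carrier Umat_carrier L T S assms(7)] assms(6)
    unfolding A_def Aop_def by simp
  moreover have "ln (det (A * SigmaBar)) = ln (det A) + ln (det SigmaBar)"
    using det_mult[OF A S] pos_def_mat_det_pos[OF pA] pos_def_mat_det_pos[OF pS]
    by (simp add: ln_mult_pos)
  ultimately show ?thesis
    using pos_def_mat_mult_trace_ge[OF pA pS] unfolding Jfun_def A_def by simp
qed

end
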